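(* Let $G$ be a torsion-free group, $\mathbb{F}$ a field, $\alpha$ a zero divisor in $\mathbb{F}[G]$ with $|supp(\alpha)|=4$ and $|S_\alpha|=12$, and $\beta$ a non-zero element of $\mathbb{F}[G]$ with $\alpha\beta=0$. Let $B=supp(\alpha)$, $C=supp(\beta)$. If $s\in\Delta^i$ and $s'\in\Delta^j$ with $s\ne s'$ and $i,j\in\{2,3,4\}$, then $|\mathcal{V}(s)\cap\mathcal{V}(s')|\le1$.
   Context: $supp(\gamma)=\{x\in G:\gamma_x\ne0\}$; $S_\alpha=\{h^{-1}h':h\ne h',\ h,h'\in supp(\alpha)\}$. $BC=\{bc:b\in B,c\in C\}$. For $s\in BC$, $R(s)=\{(b,c)\in B\times C: bc=s\}$ and $r(s)=|R(s)|$; $\Delta^i=\{s\in BC: r(s)=i\}$; $\mathcal{V}(s)=\{g\in C:(sg^{-1},g)\in R(s)\}$. *)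

theory Defs
  imports "HOL-Algebra.Group"
begin

definition torsion_free :: "('g, 'b) monoid_scheme \<Rightarrow> bool" where
  "torsion_free G \<longleftrightarrow>
     (\<forall>g \<in> carrier G. g \<noteq> \<one>\<^bsub>G\<^esub> \<longrightarrow> (\<forall>n::nat. n > 0 \<longrightarrow> g [^]\<^bsub>G\<^esub> n \<noteq> \<one>\<^bsub>G\<^esub>))"

definition supp :: "('g \<Rightarrow> 'f::zero) \<Rightarrow> 'g set" where
  "supp a = {x. a x \<noteq> 0}"

definition group_ring :: "('g, 'b) monoid_scheme \<Rightarrow> ('g \<Rightarrow> 'f::zero) set" where
  "group_ring G = {a. finite (supp a) \<and> supp a \<subseteq> carrier G}"

definition gr_mult :: "('g, 'b) monoid_scheme \<Rightarrow> ('g \<Rightarrow> 'f::field) \<Rightarrow> ('g \<Rightarrow> 'f) \<Rightarrow> 'g \<Rightarrow> 'f" where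
  "gr_mult G a b = (\<lambda>x. if x \<in> carrier G
      then (\<Sum>h\<in>supp a. a h * b (inv\<^bsub>G\<^esub> h \<otimes>\<^bsub>G\<^esub> x)) else 0)"

definition S_set :: "('g, 'b) monoid_scheme \<Rightarrow> ('g \<Rightarrow> 'f::zero) \<Rightarrow> 'g set" where
  "S_set G a = {inv\<^bsub>G\<^esub> h \<otimes>\<^bsub>G\<^esub> h' | h h'. h \<noteq> h' \<and> h \<in> supp a \<and> h' \<in> supp a}"

definition prodset :: "('g, 'b) monoid_scheme \<Rightarrow> 'g set \<Rightarrow> 'g set \<Rightarrow> 'g set" where
  "prodset G B C = {b \<otimes>\<^bsub>G\<^esub> c | b c. b \<in> B \<and> c \<in> C}"

definition Rset :: "('g, 'b) monoid_scheme \<Rightarrow> 'g set \<Rightarrow> 'g set \<Rightarrow> 'g \<Rightarrow> ('g \<times> 'g) set" where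
  "Rset G B C s = {(b, c). b \<in> B \<and> c \<in> C \<and> b \<otimes>\<^bsub>G\<^esub> c = s}"

definition rnum :: "('g, 'b) monoid_scheme \<Rightarrow> 'g set \<Rightarrow> 'g set \<Rightarrow> 'g \<Rightarrow> nat" where
  "rnum G B C s = card (Rset G B C s)"

definition Delta :: "('g, 'b) monoid_scheme \<Rightarrow> 'g set \<Rightarrow> 'g set \<Rightarrow> nat \<Rightarrow> 'g set" where
  "Delta G B C i = {s \<in> prodset G B C. rnum G B C s = i}"

definition Vset :: "('g, 'b) monoid_scheme \<Rightarrow> 'g set \<Rightarrow> 'g set \<Rightarrow> 'g \<Rightarrow> 'g set" where
  "Vset G B C s = {g \<in> C. (s \<otimes>\<^bsub>G\<^esub> inv\<^bsub>G\<^esub> g, g) \<in> Rset G B C s}"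

end

theory Submission
  imports Defs
begin

text \<open>Of the hypotheses only the following matter: since 4 elements give exactly 4 \<sqdot> 3 = 12
  ordered pairs of distinct elements, the condition on S_\<alpha> says that
  (h, h') \<mapsto> h\<inverse>h' is injective on such pairs of supp \<alpha>. If two distinct g, g' lay in
  V(s) \<inter> V(s'), then (sg\<inverse>, sg'\<inverse>) and (s'g\<inverse>, s'g'\<inverse>) would be two such pairs with the
  same quotient gg'\<inverse>, forcing s = s'.\<close>

lemma card_distinct_pairs:
  assumes "finite A"
  shows "card {(h, h'). h \<noteq> h' \<and> h \<in> A \<and> h' \<in> A} = card A * card A - card A"
proof -
  have "{(h, h'). h \<noteq> h' \<and> h \<in> A \<and> h' \<in> A} = A \<times> A - (\<lambda>h. (h, h)) ` A" by auto
  moreover have "card ((\<lambda>h. (h, h)) ` A) = card A" by (rule card_image) (auto intro: inj_onI)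
  ultimately show ?thesis
    using assms by (simp add: card_Diff_subset card_cartesian_product image_subset_iff)
qed

lemma S_set_card_imp_inj_on:
  assumes "finite (supp a)"
    and "card (S_set G a) = card (supp a) * card (supp a) - card (supp a)"
  shows "inj_on (\<lambda>(h, h'). inv\<^bsub>G\<^esub> h \<otimes>\<^bsub>G\<^esub> h')
           {(h, h'). h \<noteq> h' \<and> h \<in> supp a \<and> h' \<in> supp a}"
    (is "inj_on ?q ?P")
proof -
  have "S_set G a = ?q ` ?P" unfolding S_set_def by auto
  moreover have "finite ?P"
    by (rule finite_subset[of _ "supp a \<times> supp a"]) (use assms(1) in auto)
  ultimately show ?thesis
    using assms by (simp add: card_distinct_pairs inj_on_iff_eq_card)
qed

lemma (in group) inv_mult_inv_cancel_left:
  assumes "t \<in> carrier G" "x \<in> carrier G" "y \<in> carrier G"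
  shows "inv (t \<otimes> inv x) \<otimes> (t \<otimes> inv y) = x \<otimes> inv y"
proof -
  have "inv t \<otimes> (t \<otimes> inv y) = inv y"
    using assms by (metis inv_closed l_inv l_one m_assoc)
  then show ?thesis using assms by (simp add: inv_mult_group m_assoc)
qed

lemma (in group) card_Vset_Int_le_1:
  assumes "finite C" "C \<subseteq> carrier G"
    and "s \<in> carrier G" "s' \<in> carrier G" "s \<noteq> s'"
    and inj: "inj_on (\<lambda>(h, h'). inv h \<otimes> h') {(h, h'). h \<noteq> h' \<and> h \<in> B \<and> h' \<in> B}"
  shows "card (Vset G B C s \<inter> Vset G B C s') \<le> 1"
proof -
  have "x = y" if x: "x \<in> Vset G B C s \<inter> Vset G B C s'"
    and y: "y \<in> Vset G B C s \<inter> Vset G B C s'" for x y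
  proof (rule ccontr)
    assume "x \<noteq> y"
    from x y have xG: "x \<in> carrier G" and yG: "y \<in> carrier G"
      using assms(2) unfolding Vset_def by auto
    have pair: "(t \<otimes> inv x, t \<otimes> inv y) \<in> {(h, h'). h \<noteq> h' \<and> h \<in> B \<and> h' \<in> B}"
      if "t \<in> {s, s'}" for t
      using that \<open>x \<noteq> y\<close> x y xG yG assms(3,4)
      unfolding Vset_def Rset_def by (auto dest: inj_onD[OF inv_inj])
    have "(s \<otimes> inv x, s \<otimes> inv y) = (s' \<otimes> inv x, s' \<otimes> inv y)"
      using inj_onD[OF inj _ pair[of s] pair[of s']] assms(3,4) xG yG
      by (simp add: inv_mult_inv_cancel_left)
    with assms(3-5) xG show False by simp
  qed
  moreover have "finite (Vset G B C s \<inter> Vset G B C s')"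
    using assms(1) unfolding Vset_def by auto
  ultimately show ?thesis by (simp add: card_le_Suc0_iff_eq)
qed

theorem mainTheorem17:
  fixes G :: "('g, 'b) monoid_scheme"
    and \<alpha> \<beta> :: "'g \<Rightarrow> 'f::field"
    and s s' :: 'g and i j :: nat
  assumes "group G" and "torsion_free G"
    and "\<alpha> \<in> group_ring G" and "\<beta> \<in> group_ring G"
    and "card (supp \<alpha>) = 4" and "card (S_set G \<alpha>) = 12"
    and "\<beta> \<noteq> (\<lambda>_. 0)" and "gr_mult G \<alpha> \<beta> = (\<lambda>_. 0)"
    and "s \<in> Delta G (supp \<alpha>) (supp \<beta>) i" and "s' \<in> Delta G (supp \<alpha>) (supp \<beta>) j"
    and "s \<noteq> s'" and "i \<in> {2, 3, 4}" and "j \<in> {2, 3, 4}"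
  shows "card (Vset G (supp \<alpha>) (supp \<beta>) s \<inter> Vset G (supp \<alpha>) (supp \<beta>) s') \<le> 1"
proof -
  interpret group G by fact
  have \<alpha>: "finite (supp \<alpha>)" "supp \<alpha> \<subseteq> carrier G"
    and \<beta>: "finite (supp \<beta>)" "supp \<beta> \<subseteq> carrier G"
    using assms(3,4) unfolding group_ring_def by auto
  have "s \<in> carrier G" "s' \<in> carrier G"
    using assms(9,10) \<alpha>(2) \<beta>(2) unfolding Delta_def prodset_def by auto
  moreover have "inj_on (\<lambda>(h, h'). inv\<^bsub>G\<^esub> h \<otimes>\<^bsub>G\<^esub> h') {(h, h'). h \<noteq> h' \<and> h \<in> supp \<alpha> \<and> h' \<in> supp \<alpha>}"
    using S_set_card_imp_inj_on[OF \<alpha>(1)] assms(5,6) by simp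
  ultimately show ?thesis
    using card_Vset_Int_le_1[OF \<beta> _ _ assms(11)] by blast
qed

end
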